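(* Let a system $u_{n+1,x}^j = F^j(x,n,u_{n,x}^j,u_n,u_{n+1})$, $j=1,\dots,N$, be the compatibility condition of the linear systems $$\Phi_{n+1}=U_n\Phi_n,\qquad \Phi_{n,x}=V_n\Phi_n,$$ i.e. $D_xU_n=V_{n+1}U_n-U_nV_n$ holds by virtue of the system, where $U_n=(a_{ik,n})$ is an $m\times m$ upper triangular matrix and $V_n=(b_{ik,n})$ is an $m\times m$ lower triangular matrix, with entries functions of the dynamical variables. For $k\ge0$ let $P^{(k)}_n=U_{n+k}U_{n+k-1}\cdots U_n$ and let $p^{(k)}_{1m,n}$ denote its entry in the first row and last column. If $D_nb_{11,n}=b_{11,n}$ and $b_{11,n}=b_{mm,n}$, then $J=p^{(k)}_{1m,n}$ is an $x$-integral of the system, i.e. $D_xJ=0$ by virtue of the system.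
   Context: The dynamical variables are $u^j_n,u^j_{n\pm1},\dots$ and $u^j_{n,x},u^j_{n,xx},\dots$, treated as independent; $D_n$ is the shift $D_ny(n)=y(n+1)$ and $D_x$ is the total $x$-derivative, with $x$-derivatives of shifted variables expressed through the system (and its converse form $u^j_{n-1,x}=G^j(x,n,u^j_{n,x},u_n,u_{n-1})$, assumed to exist). A function $J$ of $x,n$ and $u_n,u_{n\pm1},u_{n\pm2},\dots$ is called an $x$-integral if $D_xJ=0$ holds by virtue of the system. *)

theory Defs
  imports Main
begin

text \<open>Abstract differential-difference ring: the ring of functions of the dynamical
  variables (modulo the system).  Dx is the total x-derivative (a derivation),
  Dn is the shift operator (a ring endomorphism), and they commute by virtue
  of the system.\<close>

definition is_derivation :: "('a::comm_ring_1 \<Rightarrow> 'a) \<Rightarrow> bool" where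
  "is_derivation D \<longleftrightarrow> (\<forall>a b. D (a + b) = D a + D b) \<and> (\<forall>a b. D (a * b) = D a * b + a * D b)"

definition is_ring_endo :: "('a::comm_ring_1 \<Rightarrow> 'a) \<Rightarrow> bool" where
  "is_ring_endo S \<longleftrightarrow> (\<forall>a b. S (a + b) = S a + S b) \<and> (\<forall>a b. S (a * b) = S a * S b)
     \<and> S 0 = 0 \<and> S 1 = 1"

definition diff_diff_ring :: "('a::comm_ring_1 \<Rightarrow> 'a) \<Rightarrow> ('a \<Rightarrow> 'a) \<Rightarrow> bool" where
  "diff_diff_ring Dx Dn \<longleftrightarrow> is_derivation Dx \<and> is_ring_endo Dn \<and> (\<forall>a. Dx (Dn a) = Dn (Dx a))"

text \<open>m x m matrices with rows/columns indexed by 1..m.\<close>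
type_synonym 'a mat = "nat \<Rightarrow> nat \<Rightarrow> 'a"

definition mat_mult :: "nat \<Rightarrow> 'a::comm_ring_1 mat \<Rightarrow> 'a mat \<Rightarrow> 'a mat" where
  "mat_mult m A B = (\<lambda>i k. \<Sum>j\<in>{1..m}. A i j * B j k)"

definition upper_triangular :: "nat \<Rightarrow> 'a::zero mat \<Rightarrow> bool" where
  "upper_triangular m A \<longleftrightarrow> (\<forall>i\<in>{1..m}. \<forall>k\<in>{1..m}. k < i \<longrightarrow> A i k = 0)"

definition lower_triangular :: "nat \<Rightarrow> 'a::zero mat \<Rightarrow> bool" where
  "lower_triangular m A \<longleftrightarrow> (\<forall>i\<in>{1..m}. \<forall>k\<in>{1..m}. i < k \<longrightarrow> A i k = 0)"

text \<open>Entrywise shift by j steps: the matrix A_{n+j} from A_n.\<close>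
definition mat_shift :: "('a \<Rightarrow> 'a) \<Rightarrow> nat \<Rightarrow> 'a mat \<Rightarrow> 'a mat" where
  "mat_shift Dn j A = (\<lambda>i k. (Dn ^^ j) (A i k))"

fun Pmat :: "nat \<Rightarrow> ('a::comm_ring_1 \<Rightarrow> 'a) \<Rightarrow> 'a mat \<Rightarrow> nat \<Rightarrow> 'a mat" where
  "Pmat m Dn U 0 = U"
| "Pmat m Dn U (Suc k) = mat_mult m (mat_shift Dn (Suc k) U) (Pmat m Dn U k)"

end

theory Submission
  imports Defs
begin

text \<open>Call a matrix A a gauge map from V to W if Dx A = W A - A V.  Such an A carries
  solutions of Phi_x = V Phi to solutions of Psi_x = W Psi, and gauge maps compose.  The
  compatibility condition says that U_n is a gauge map from V_n to V_(n+1), hence P^(k)_n is one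
  from V_n to V_(n+k+1).  Both being lower triangular, the corner entry p = p^(k)_(1m,n) satisfies
  Dx p = (Dn^(k+1) b_11 - b_mm) p, and this factor vanishes.\<close>

lemma is_ring_endo_funpow: "is_ring_endo S \<Longrightarrow> is_ring_endo (S ^^ j)"
  by (induction j) (auto simp: is_ring_endo_def)

lemma ring_endo_sum:
  assumes "is_ring_endo S"
  shows "S (sum f A) = (\<Sum>x\<in>A. S (f x))"
proof (cases "finite A")
  case True
  then show ?thesis
    using assms by (induction A rule: finite_induct) (auto simp: is_ring_endo_def)
next
  case False
  then show ?thesis using assms by (simp add: is_ring_endo_def)
qed

lemma ring_endo_diff:
  assumes "is_ring_endo S"
  shows "S (a - b) = S a - S b"
  using assms unfolding is_ring_endo_def by (metis diff_add_cancel eq_diff_eq)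

lemma derivation_zero: "is_derivation D \<Longrightarrow> D 0 = 0"
  unfolding is_derivation_def by (metis add_cancel_right_right add_0)

lemma derivation_sum:
  assumes "is_derivation D"
  shows "D (sum f A) = (\<Sum>x\<in>A. D (f x))"
proof (cases "finite A")
  case True
  then show ?thesis
    using assms by (induction A rule: finite_induct) (auto simp: is_derivation_def derivation_zero)
next
  case False
  then show ?thesis using assms by (simp add: derivation_zero)
qed

lemma diff_diff_ring_funpow_commute:
  assumes "diff_diff_ring Dx Dn"
  shows "Dx ((Dn ^^ j) a) = (Dn ^^ j) (Dx a)"
  using assms by (induction j arbitrary: a) (auto simp: diff_diff_ring_def)

lemma mat_mult_assoc: "mat_mult m (mat_mult m A B) C = mat_mult m A (mat_mult m B C)"
  unfolding mat_mult_def
  by (auto simp: sum_distrib_left sum_distrib_right mult.assoc intro!: ext sum.swap)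

lemma derivation_mat_mult:
  assumes "is_derivation D"
  shows "D (mat_mult m A B i l) =
    (\<Sum>j\<in>{1..m}. D (A i j) * B j l + A i j * D (B j l))"
  using assms by (simp add: mat_mult_def derivation_sum is_derivation_def)

lemma mat_mult_lower_triangular_first_row:
  assumes "lower_triangular m W" "m \<ge> 1"
  shows "mat_mult m W A 1 l = W 1 1 * A 1 l"
proof -
  have "W 1 j * A j l = 0" if "j \<in> {1..m} - {1}" for j
    using assms that by (auto simp: lower_triangular_def)
  then show ?thesis
    using assms(2) by (simp add: mat_mult_def sum.remove[of _ 1] sum.neutral)
qed

lemma mat_mult_lower_triangular_last_column:
  assumes "lower_triangular m V" "m \<ge> 1"
  shows "mat_mult m A V i m = A i m * V m m"
proof -
  have "A i j * V j m = 0" if "j \<in> {1..m} - {m}" for j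
    using assms that by (auto simp: lower_triangular_def)
  then show ?thesis
    using assms(2) by (simp add: mat_mult_def sum.remove[of _ m] sum.neutral)
qed

lemma mat_shift_mat_mult:
  assumes "is_ring_endo Dn"
  shows "mat_shift Dn j (mat_mult m A B) = mat_mult m (mat_shift Dn j A) (mat_shift Dn j B)"
  using is_ring_endo_funpow[OF assms]
  by (simp add: mat_shift_def mat_mult_def ring_endo_sum is_ring_endo_def)

lemma mat_shift_mat_shift: "mat_shift Dn i (mat_shift Dn j A) = mat_shift Dn (i + j) A"
  by (simp add: mat_shift_def funpow_add)

lemma lower_triangular_mat_shift:
  assumes "is_ring_endo Dn" "lower_triangular m V"
  shows "lower_triangular m (mat_shift Dn j V)"
  using is_ring_endo_funpow[OF assms(1)] assms(2)
  by (simp add: lower_triangular_def mat_shift_def is_ring_endo_def)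

definition gauge_map :: "('a::comm_ring_1 \<Rightarrow> 'a) \<Rightarrow> nat \<Rightarrow> 'a mat \<Rightarrow> 'a mat \<Rightarrow> 'a mat \<Rightarrow> bool"
  where "gauge_map Dx m V W A \<longleftrightarrow>
    (\<forall>i\<in>{1..m}. \<forall>l\<in>{1..m}. Dx (A i l) = mat_mult m W A i l - mat_mult m A V i l)"

lemma gauge_map_mat_mult:
  assumes "is_derivation Dx" "gauge_map Dx m V W B" "gauge_map Dx m W X A"
  shows "gauge_map Dx m V X (mat_mult m A B)"
  unfolding gauge_map_def
proof (intro ballI)
  fix i l
  assume il: "i \<in> {1..m}" "l \<in> {1..m}"
  have "Dx (mat_mult m A B i l) = (\<Sum>j\<in>{1..m}. Dx (A i j) * B j l + A i j * Dx (B j l))"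
    using assms(1) by (rule derivation_mat_mult)
  also have "\<dots> = (\<Sum>j\<in>{1..m}. (mat_mult m X A i j - mat_mult m A W i j) * B j l
      + A i j * (mat_mult m W B j l - mat_mult m B V j l))"
    using il assms(2,3) by (intro sum.cong) (auto simp: gauge_map_def)
  also have "\<dots> = mat_mult m (mat_mult m X A) B i l - mat_mult m (mat_mult m A W) B i l
      + mat_mult m A (mat_mult m W B) i l - mat_mult m A (mat_mult m B V) i l"
    unfolding mat_mult_def[of m _ B] mat_mult_def[of m A]
    by (simp add: algebra_simps sum.distrib sum_subtractf)
  also have "\<dots> = mat_mult m X (mat_mult m A B) i l - mat_mult m (mat_mult m A B) V i l"
    by (simp add: mat_mult_assoc)
  finally show "Dx (mat_mult m A B i l) =
      mat_mult m X (mat_mult m A B) i l - mat_mult m (mat_mult m A B) V i l" .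
qed

lemma gauge_map_mat_shift:
  assumes "diff_diff_ring Dx Dn" "gauge_map Dx m V W A"
  shows "gauge_map Dx m (mat_shift Dn j V) (mat_shift Dn j W) (mat_shift Dn j A)"
  unfolding gauge_map_def
proof (intro ballI)
  fix i l
  assume il: "i \<in> {1..m}" "l \<in> {1..m}"
  have endo: "is_ring_endo (Dn ^^ j)"
    using assms(1) is_ring_endo_funpow by (auto simp: diff_diff_ring_def)
  have "Dx (mat_shift Dn j A i l) = (Dn ^^ j) (Dx (A i l))"
    using assms(1) by (simp add: mat_shift_def diff_diff_ring_funpow_commute)
  also have "\<dots> = mat_shift Dn j (mat_mult m W A) i l - mat_shift Dn j (mat_mult m A V) i l"
    using assms(2) il by (simp add: gauge_map_def mat_shift_def ring_endo_diff[OF endo])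
  finally show "Dx (mat_shift Dn j A i l) =
      mat_mult m (mat_shift Dn j W) (mat_shift Dn j A) i l
      - mat_mult m (mat_shift Dn j A) (mat_shift Dn j V) i l"
    using assms(1) by (simp add: mat_shift_mat_mult diff_diff_ring_def)
qed

lemma gauge_map_Pmat:
  assumes "diff_diff_ring Dx Dn" "gauge_map Dx m V (mat_shift Dn 1 V) U"
  shows "gauge_map Dx m V (mat_shift Dn (Suc k) V) (Pmat m Dn U k)"
proof (induction k)
  case 0
  then show ?case using assms(2) by simp
next
  case (Suc k)
  have "gauge_map Dx m (mat_shift Dn (Suc k) V) (mat_shift Dn (Suc (Suc k)) V)
      (mat_shift Dn (Suc k) U)"
    using gauge_map_mat_shift[OF assms, of "Suc k"] by (simp add: mat_shift_mat_shift)
  with Suc.IH show ?case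
    using assms(1) by (simp add: gauge_map_mat_mult diff_diff_ring_def)
qed

lemma gauge_map_corner_const:
  assumes "gauge_map Dx m V W A" "lower_triangular m V" "lower_triangular m W"
    and "m \<ge> 1" "W 1 1 = V m m"
  shows "Dx (A 1 m) = 0"
proof -
  have "Dx (A 1 m) = mat_mult m W A 1 m - mat_mult m A V 1 m"
    using assms(1,4) by (simp add: gauge_map_def)
  also have "\<dots> = W 1 1 * A 1 m - A 1 m * V m m"
    by (simp only: mat_mult_lower_triangular_first_row[OF assms(3,4)]
        mat_mult_lower_triangular_last_column[OF assms(2,4)])
  finally show ?thesis
    using assms(5) by (simp add: mult.commute)
qed

theorem lemma4:
  fixes Dx Dn :: "'a::comm_ring_1 \<Rightarrow> 'a" and m :: nat and U V :: "'a mat" and k :: nat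
  assumes "diff_diff_ring Dx Dn"
    and "m \<ge> 1"
    and "upper_triangular m U"
    and "lower_triangular m V"
    and "\<forall>i\<in>{1..m}. \<forall>l\<in>{1..m}.
           Dx (U i l) = mat_mult m (mat_shift Dn 1 V) U i l - mat_mult m U V i l"
    and "Dn (V 1 1) = V 1 1"
    and "V 1 1 = V m m"
  shows "Dx (Pmat m Dn U k 1 m) = 0"
proof -
  have "gauge_map Dx m V (mat_shift Dn 1 V) U"
    using assms(5) by (simp only: gauge_map_def)
  then have gauge: "gauge_map Dx m V (mat_shift Dn (Suc k) V) (Pmat m Dn U k)"
    by (rule gauge_map_Pmat[OF assms(1)])
  have lower: "lower_triangular m (mat_shift Dn (Suc k) V)"
    using assms(1,4) by (simp add: lower_triangular_mat_shift diff_diff_ring_def)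
  have "(Dn ^^ j) (V 1 1) = V 1 1" for j
    using assms(6) by (induction j) simp_all
  then have "mat_shift Dn (Suc k) V 1 1 = V m m"
    using assms(7) by (simp only: mat_shift_def)
  with gauge assms(4) lower assms(2) show ?thesis
    by (rule gauge_map_corner_const)
qed

end
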